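(* Let $\mathcal{M}\subseteq\mathbb{R}^d$ be a compact embedded $C^2$-submanifold without boundary with reach $\tau_{\mathcal{M}}>0$, let $f\in C^1(\mathbb{R}^d)$, $C=\sup_{\mathcal{T}(\tau_{\mathcal{M}})}\|\nabla f\|$, $\eta\ge0$, $\tau\in(0,\tau_{\mathcal{M}})$, $\epsilon>0$, and $s\in C^1(\mathbb{R}^d;\mathbb{R}^d)$ with $\|s(x)-\pi(x)\|<\epsilon$ and $\|s'(x)-P_0(x)\|<\epsilon$ for all $x\in\mathcal{T}(\tau)$. Then $$\sup_{x\in\mathcal{T}(\tau)}\|s'(x)\|\le\epsilon+\frac{1}{1-\tau/\tau_{\mathcal{M}}}.$$ If additionally $\epsilon\in(0,\tau]$, then for all $x\in\mathcal{T}(\tau)$, $$\|G_s^\eta(x)\|\le C\|s'(x)\|+\eta\|s(x)-x\|\le C\Big(\epsilon+\frac{1}{1-\tau/\tau_{\mathcal{M}}}\Big)+2\eta\tau,$$ where $G_s^\eta(x)=s'(x)\nabla f(x)+\eta(x-s(x))$.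
   Context: Reach $\tau_{\mathcal{M}}$: largest $\tau\ge0$ such that $(p,v)\mapsto p+v$ on $\{(p,v):p\in\mathcal{M},v\in N_p\mathcal{M},\|v\|<\tau\}$ is a diffeomorphism onto its image; $\mathcal{T}(\tau)=\{p+v:p\in\mathcal{M},v\in N_p\mathcal{M},\|v\|<\tau\}$; $\pi(x)$ is the unique closest point of $\mathcal{M}$ to $x$, $P_0(x)=\pi'(x)$ its Jacobian. Matrix norms are operator norms. *)

theory Defs
  imports "HOL-Analysis.Analysis"
begin

definition C1_on :: "'a::real_normed_vector set \<Rightarrow> ('a \<Rightarrow> 'b::real_normed_vector) \<Rightarrow> bool" where
  "C1_on U f \<longleftrightarrow> (\<exists>D :: 'a \<Rightarrow> ('a \<Rightarrow>\<^sub>L 'b).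
      (\<forall>x\<in>U. (f has_derivative blinfun_apply (D x)) (at x)) \<and> continuous_on U D)"

definition C2_on :: "'a::real_normed_vector set \<Rightarrow> ('a \<Rightarrow> 'b::real_normed_vector) \<Rightarrow> bool" where
  "C2_on U f \<longleftrightarrow> (\<exists>(D :: 'a \<Rightarrow> ('a \<Rightarrow>\<^sub>L 'b)) (D2 :: 'a \<Rightarrow> ('a \<Rightarrow>\<^sub>L ('a \<Rightarrow>\<^sub>L 'b))).
      (\<forall>x\<in>U. (f has_derivative blinfun_apply (D x)) (at x)) \<and>
      (\<forall>x\<in>U. (D has_derivative blinfun_apply (D2 x)) (at x)) \<and> continuous_on U D2)"

definition C2_submanifold :: "'a::euclidean_space set \<Rightarrow> nat \<Rightarrow> bool" where
  "C2_submanifold M n \<longleftrightarrow> (\<forall>p\<in>M. \<exists>U V (\<phi> :: 'a \<Rightarrow> 'a) \<psi> T.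
      open U \<and> p \<in> U \<and> open V \<and> subspace T \<and> dim T = n \<and>
      C2_on U \<phi> \<and> C2_on V \<psi> \<and> \<phi> ` U = V \<and>
      (\<forall>x\<in>U. \<psi> (\<phi> x) = x) \<and> (\<forall>y\<in>V. \<phi> (\<psi> y) = y) \<and>
      \<phi> ` (M \<inter> U) = T \<inter> V)"

definition tangent_space :: "'a::euclidean_space set \<Rightarrow> 'a \<Rightarrow> 'a set" where
  "tangent_space M p = {v. \<exists>\<gamma> :: real \<Rightarrow> 'a. \<exists>e>0. \<gamma> 0 = p \<and>
      (\<forall>t. \<bar>t\<bar> < e \<longrightarrow> \<gamma> t \<in> M) \<and> (\<gamma> has_vector_derivative v) (at 0)}"

definition normal_space :: "'a::euclidean_space set \<Rightarrow> 'a \<Rightarrow> 'a set" where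
  "normal_space M p = {v. \<forall>u\<in>tangent_space M p. v \<bullet> u = 0}"

definition normal_bundle :: "'a::euclidean_space set \<Rightarrow> real \<Rightarrow> ('a \<times> 'a) set" where
  "normal_bundle M r = {(p, v). p \<in> M \<and> v \<in> normal_space M p \<and> norm v < r}"

definition tube :: "'a::euclidean_space set \<Rightarrow> real \<Rightarrow> 'a set" where
  "tube M r = (\<lambda>(p, v). p + v) ` normal_bundle M r"

definition tubular_diffeo :: "'a::euclidean_space set \<Rightarrow> real \<Rightarrow> bool" where
  "tubular_diffeo M r \<longleftrightarrow>
     inj_on (\<lambda>(p, v). p + v) (normal_bundle M r) \<and> open (tube M r) \<and>
     (\<exists>g :: 'a \<Rightarrow> 'a \<times> 'a. C1_on (tube M r) g \<and>
        (\<forall>(p, v)\<in>normal_bundle M r. g (p + v) = (p, v)))"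

definition is_reach :: "'a::euclidean_space set \<Rightarrow> real \<Rightarrow> bool" where
  "is_reach M t \<longleftrightarrow> t \<ge> 0 \<and> tubular_diffeo M t \<and> (\<forall>r\<ge>0. tubular_diffeo M r \<longrightarrow> r \<le> t)"

definition proj :: "'a::euclidean_space set \<Rightarrow> 'a \<Rightarrow> 'a" where
  "proj M x = (THE p. p \<in> M \<and> (\<forall>q\<in>M. dist x p \<le> dist x q))"

definition P0 :: "'a::euclidean_space set \<Rightarrow> 'a \<Rightarrow> ('a \<Rightarrow>\<^sub>L 'a)" where
  "P0 M x = Blinfun (frechet_derivative (proj M) (at x))"

end

theory Submission
  imports Defs
begin

text \<open>Below the reach the tubular map is injective, so every point p + v of the tube has p as
  its unique nearest point in M, i.e. proj (p + v) = p. Comparing distances from the points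
  p + c v, c < r, gives Federer's inequality 2 r (v \<bullet> (q - p)) \<le> |v| |q - p|^2 for normal
  vectors v at p. Adding it at both ends of p + v and q + w with |v|, |w| \<le> t yields
  (1 - t/r) |p - q| \<le> |(p + v) - (q + w)|, so proj is locally (1 - \<tau>/\<tau>M)^-1-Lipschitz
  around T(\<tau>), which bounds the norm of its derivative P0. Everything else is the triangle
  inequality.\<close>

lemma nearest_point_in_normal_space:
  fixes M :: "'a::euclidean_space set"
  assumes q: "q \<in> M" and nearest: "\<forall>z\<in>M. dist x q \<le> dist x z"
  shows "x - q \<in> normal_space M q"
  unfolding normal_space_def
proof clarify
  fix u assume "u \<in> tangent_space M q"
  then obtain \<gamma> e where e: "e > 0" "\<gamma> 0 = q" "\<forall>t. \<bar>t\<bar> < e \<longrightarrow> \<gamma> t \<in> M"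
    and \<gamma>': "(\<gamma> has_vector_derivative u) (at 0)"
    unfolding tangent_space_def by blast
  define \<phi> where "\<phi> t = (x - \<gamma> t) \<bullet> (x - \<gamma> t)" for t
  have dist_deriv: "((\<lambda>t. x - \<gamma> t) has_derivative (\<lambda>t. - (t *\<^sub>R u))) (at 0)"
    using has_derivative_diff[OF has_derivative_const[of x] \<gamma>'[unfolded has_vector_derivative_def]]
    by simp
  have "(\<phi> has_derivative (\<lambda>h. (x - \<gamma> 0) \<bullet> (- (h *\<^sub>R u)) + (- (h *\<^sub>R u)) \<bullet> (x - \<gamma> 0))) (at 0)"
    unfolding \<phi>_def by (rule has_derivative_inner[OF dist_deriv dist_deriv])
  moreover have "(\<lambda>h. (x - \<gamma> 0) \<bullet> (- (h *\<^sub>R u)) + (- (h *\<^sub>R u)) \<bullet> (x - \<gamma> 0)) = (*) (-2 * ((x - q) \<bullet> u))"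
    using e(2) by (auto simp: inner_commute algebra_simps fun_eq_iff)
  ultimately have "DERIV \<phi> 0 :> -2 * ((x - q) \<bullet> u)"
    by (simp add: has_field_derivative_def)
  moreover have "\<forall>t. \<bar>0 - t\<bar> < e \<longrightarrow> \<phi> 0 \<le> \<phi> t"
  proof (intro allI impI)
    fix t :: real assume "\<bar>0 - t\<bar> < e"
    then have "dist x q \<le> dist x (\<gamma> t)" using e nearest by auto
    then have "norm (x - q) ^ 2 \<le> norm (x - \<gamma> t) ^ 2" by (simp add: dist_norm)
    then show "\<phi> 0 \<le> \<phi> t" using e(2) by (simp add: \<phi>_def power2_norm_eq_inner)
  qed
  ultimately have "-2 * ((x - q) \<bullet> u) = 0" by (rule DERIV_local_min[OF _ e(1)])
  then show "(x - q) \<bullet> u = 0" by simp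
qed

lemma tubular_diffeo_nearest_point_unique:
  fixes M :: "'a::euclidean_space set"
  assumes td: "tubular_diffeo M r" and pu: "(p, u) \<in> normal_bundle M r"
    and q: "q \<in> M" and nearest: "\<forall>z\<in>M. dist (p + u) q \<le> dist (p + u) z"
  shows "q = p"
proof -
  have "p \<in> M" and "norm u < r" using pu by (auto simp: normal_bundle_def)
  have "dist (p + u) q \<le> dist (p + u) p" using nearest \<open>p \<in> M\<close> by (rule bspec)
  then have "norm (p + u - q) \<le> norm u" by (simp add: dist_norm)
  then have qu: "(q, p + u - q) \<in> normal_bundle M r"
    unfolding normal_bundle_def
    using q nearest_point_in_normal_space[OF q nearest] \<open>norm u < r\<close> by simp
  have inj: "inj_on (\<lambda>(p, v). p + v) (normal_bundle M r)"
    using td by (simp add: tubular_diffeo_def)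
  have "(\<lambda>(p, v). p + v) (q, p + u - q) = (\<lambda>(p, v). p + v) (p, u)" by simp
  with inj have "(q, p + u - q) = (p, u)" using qu pu by (rule inj_onD)
  then show ?thesis by (rule prod.inject[THEN iffD1, THEN conjunct1])
qed

lemma tubular_diffeo_nearest_point:
  fixes M :: "'a::euclidean_space set"
  assumes "compact M" and td: "tubular_diffeo M r" and pu: "(p, u) \<in> normal_bundle M r"
  shows "p \<in> M \<and> (\<forall>z\<in>M. dist (p + u) p \<le> dist (p + u) z)"
proof -
  have "M \<noteq> {}" using pu by (auto simp: normal_bundle_def)
  then obtain q where "q \<in> M" and q: "\<forall>z\<in>M. dist (p + u) q \<le> dist (p + u) z"
    using distance_attains_inf[OF compact_imp_closed[OF \<open>compact M\<close>]] by metis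
  moreover have "q = p" using tubular_diffeo_nearest_point_unique[OF td pu \<open>q \<in> M\<close> q] .
  ultimately show ?thesis by simp
qed

lemma proj_tube:
  fixes M :: "'a::euclidean_space set"
  assumes "compact M" and td: "tubular_diffeo M r" and pu: "(p, u) \<in> normal_bundle M r"
  shows "proj M (p + u) = p"
  unfolding proj_def
proof (rule the_equality)
  show "p \<in> M \<and> (\<forall>q\<in>M. dist (p + u) p \<le> dist (p + u) q)"
    by (rule tubular_diffeo_nearest_point[OF assms])
qed (use tubular_diffeo_nearest_point_unique[OF td pu] in blast)

lemma tubular_diffeo_normal_inner_le:
  fixes M :: "'a::euclidean_space set"
  assumes "compact M" and td: "tubular_diffeo M r" and "0 < r"
    and p: "p \<in> M" and v: "v \<in> normal_space M p" and q: "q \<in> M"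
  shows "2 * r * (v \<bullet> (q - p)) \<le> norm v * norm (q - p) ^ 2"
proof (cases "v = 0")
  case False
  \<comment> \<open>(p, c/|v| v) lies in the open normal bundle only for c < r, hence the limit c \<rightarrow> r.\<close>
  have scaled: "2 * c * (v \<bullet> (q - p)) \<le> norm v * norm (q - p) ^ 2" if c: "0 < c" "c < r" for c
  proof -
    define u where "u = (c / norm v) *\<^sub>R v"
    have "norm u = c" using False c by (simp add: u_def)
    moreover have "u \<in> normal_space M p" using v by (simp add: u_def normal_space_def)
    ultimately have "(p, u) \<in> normal_bundle M r" using p c by (simp add: normal_bundle_def)
    then have "norm u \<le> norm (u - (q - p))"
      using tubular_diffeo_nearest_point[OF \<open>compact M\<close> td] q by (force simp: dist_norm algebra_simps)
    then have "norm u ^ 2 \<le> norm (u - (q - p)) ^ 2" by (simp add: power_mono)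
    also have "\<dots> = norm u ^ 2 - 2 * (u \<bullet> (q - p)) + norm (q - p) ^ 2"
      by (simp add: power2_norm_eq_inner inner_diff_left inner_diff_right inner_commute)
    finally have "2 * c * (v \<bullet> (q - p)) / norm v \<le> norm (q - p) ^ 2" by (simp add: u_def)
    then show ?thesis using False by (simp add: divide_le_eq mult.commute)
  qed
  show ?thesis
  proof (rule tendsto_le[OF trivial_limit_at_left_real tendsto_const])
    show "((\<lambda>c. 2 * c * (v \<bullet> (q - p))) \<longlongrightarrow> 2 * r * (v \<bullet> (q - p))) (at_left r)"
      by (auto intro!: tendsto_eq_intros)
    show "\<forall>\<^sub>F c in at_left r. 2 * c * (v \<bullet> (q - p)) \<le> norm v * norm (q - p) ^ 2"
      using eventually_at_left_real[OF \<open>0 < r\<close>] by eventually_elim (simp add: scaled)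
  qed
qed simp

lemma tubular_diffeo_base_dist_le:
  fixes M :: "'a::euclidean_space set"
  assumes "compact M" and td: "tubular_diffeo M r" and "0 < r"
    and p: "p \<in> M" and v: "v \<in> normal_space M p" and "norm v \<le> t"
    and q: "q \<in> M" and w: "w \<in> normal_space M q" and "norm w \<le> t"
  shows "(1 - t / r) * norm (p - q) \<le> norm ((p + v) - (q + w))"
proof -
  define D where "D = norm (p - q)"
  define d where "d = norm ((p + v) - (q + w))"
  define a where "a = v \<bullet> (q - p)"
  define b where "b = w \<bullet> (p - q)"
  define c where "c = ((p + v) - (q + w)) \<bullet> (p - q)"
  have "2 * r * a \<le> t * D ^ 2"
    using tubular_diffeo_normal_inner_le[OF \<open>compact M\<close> td \<open>0 < r\<close> p v q]
      mult_right_mono[OF \<open>norm v \<le> t\<close>, of "D ^ 2"]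
    by (simp add: a_def D_def norm_minus_commute)
  moreover have "2 * r * b \<le> t * D ^ 2"
    using tubular_diffeo_normal_inner_le[OF \<open>compact M\<close> td \<open>0 < r\<close> q w p]
      mult_right_mono[OF \<open>norm w \<le> t\<close>, of "D ^ 2"]
    by (simp add: b_def D_def)
  ultimately have "2 * r * (a + b) \<le> 2 * (t * D ^ 2)" by (simp add: distrib_left)
  moreover have "a + b = D ^ 2 - c"
    unfolding a_def b_def c_def D_def
    by (simp add: power2_norm_eq_inner algebra_simps inner_commute)
  moreover have "r * c \<le> r * (d * D)"
    using \<open>0 < r\<close> norm_cauchy_schwarz by (simp add: c_def d_def D_def)
  ultimately have "(r - t) * D * D \<le> r * d * D"
    by (simp add: power2_eq_square algebra_simps)
  moreover have "0 \<le> d" "0 \<le> D" by (simp_all add: d_def D_def)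
  ultimately have "(r - t) * D \<le> r * d"
    using \<open>0 < r\<close> by (cases "D = 0") (auto intro: mult_right_le_imp_le)
  then have "(r - t) * D / r \<le> r * d / r"
    using \<open>0 < r\<close> by (rule divide_right_mono[OF _ less_imp_le])
  moreover have "(1 - t / r) * D = (r - t) * D / r" using \<open>0 < r\<close> by (simp add: field_simps)
  ultimately show ?thesis using \<open>0 < r\<close> by (simp add: D_def d_def)
qed

lemma tube_mono: "r \<le> r' \<Longrightarrow> tube M r \<subseteq> tube M r'"
  unfolding tube_def normal_bundle_def by (rule image_mono) auto

lemma bounded_tube:
  fixes M :: "'a::euclidean_space set"
  assumes "bounded M"
  shows "bounded (tube M r)"
proof -
  have "tube M r \<subseteq> (\<lambda>(p, v). p + v) ` (M \<times> cball 0 r)"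
    unfolding tube_def normal_bundle_def by (rule image_mono) auto
  moreover have "bounded ((\<lambda>(p, v). p + v) ` (M \<times> cball 0 r))"
    using bounded_plus[OF assms bounded_cball[of 0 r]] by (simp add: set_plus_image split_def)
  ultimately show ?thesis by (rule bounded_subset[rotated])
qed

lemma bdd_above_norm_tube:
  fixes M :: "'a::euclidean_space set" and g :: "'a \<Rightarrow> 'b::real_normed_vector"
  assumes "compact M" and "continuous_on UNIV g"
  shows "bdd_above ((\<lambda>x. norm (g x)) ` tube M r)"
proof -
  have "compact (g ` closure (tube M r))"
    using compact_closure bounded_tube[OF compact_imp_bounded[OF \<open>compact M\<close>]]
    by (blast intro: compact_continuous_image continuous_on_subset[OF assms(2)])
  then have "bounded (g ` tube M r)"
    by (meson bounded_subset closure_subset compact_imp_bounded image_mono)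
  then show ?thesis by (simp add: bdd_above_norm[symmetric] image_comp)
qed

lemma tubular_diffeo_dist_proj:
  fixes M :: "'a::euclidean_space set"
  assumes "compact M" and "tubular_diffeo M r" and "t \<le> r" and "x \<in> tube M t"
  shows "norm (x - proj M x) < t"
proof -
  obtain p v where pv: "(p, v) \<in> normal_bundle M t" and x: "x = p + v"
    using \<open>x \<in> tube M t\<close> by (auto simp: tube_def)
  then have "(p, v) \<in> normal_bundle M r" using \<open>t \<le> r\<close> by (auto simp: normal_bundle_def)
  then have "proj M x = p" using proj_tube[OF assms(1,2)] x by simp
  then show ?thesis using pv x by (simp add: normal_bundle_def)
qed

lemma tubular_diffeo_proj_local_lipschitz:
  fixes M :: "'a::euclidean_space set"
  assumes "compact M" and td: "tubular_diffeo M r" and "0 < t" "t < r" and "x \<in> tube M t"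
  obtains \<delta> where "\<delta> > 0"
    and "\<And>y. norm (y - x) < \<delta> \<Longrightarrow> norm (proj M y - proj M x) \<le> 1 / (1 - t / r) * norm (y - x)"
proof -
  obtain p v where pv: "(p, v) \<in> normal_bundle M t" and x: "x = p + v"
    using \<open>x \<in> tube M t\<close> by (auto simp: tube_def)
  then have p: "p \<in> M" and v: "v \<in> normal_space M p" and "norm v < t"
    by (auto simp: normal_bundle_def)
  have "(p, v) \<in> normal_bundle M r" using pv \<open>t < r\<close> by (auto simp: normal_bundle_def)
  then have proj_x: "proj M x = p" using proj_tube[OF \<open>compact M\<close> td] x by simp
  have "open (tube M r)" using td by (simp add: tubular_diffeo_def)
  moreover have "x \<in> tube M r" using tube_mono[of t r M] \<open>t < r\<close> \<open>x \<in> tube M t\<close> by auto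
  ultimately obtain e where "e > 0" and e: "ball x e \<subseteq> tube M r" by (rule openE)
  show ?thesis
  proof
    show "min e (t - norm v) > 0" using \<open>e > 0\<close> \<open>norm v < t\<close> by simp
  next
    fix y assume y: "norm (y - x) < min e (t - norm v)"
    then have "y \<in> tube M r" using e by (auto simp: dist_norm norm_minus_commute)
    then obtain q w where qw: "(q, w) \<in> normal_bundle M r" and y_eq: "y = q + w"
      by (auto simp: tube_def)
    then have q: "q \<in> M" and w: "w \<in> normal_space M q" by (auto simp: normal_bundle_def)
    have proj_y: "proj M y = q" using proj_tube[OF \<open>compact M\<close> td qw] y_eq by simp
    have "norm w \<le> norm (y - p)"
      using tubular_diffeo_nearest_point[OF \<open>compact M\<close> td qw] p y_eq by (auto simp: dist_norm)
    also have "\<dots> \<le> norm (y - x) + norm v"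
      using norm_triangle_ineq[of "y - x" v] x by simp
    finally have "norm w \<le> t" using y by simp
    then have "(1 - t / r) * norm (q - p) \<le> norm (y - x)"
      using tubular_diffeo_base_dist_le[OF \<open>compact M\<close> td _ q w _ p v] \<open>norm v < t\<close> \<open>0 < t\<close> \<open>t < r\<close>
      by (simp add: x y_eq)
    moreover have "0 < 1 - t / r" using \<open>0 < t\<close> \<open>t < r\<close> by simp
    ultimately have "norm (q - p) \<le> norm (y - x) / (1 - t / r)"
      by (simp add: le_divide_eq mult.commute)
    then show "norm (proj M y - proj M x) \<le> 1 / (1 - t / r) * norm (y - x)"
      by (simp add: proj_x proj_y)
  qed
qed

lemma has_derivative_norm_le_of_local_lipschitz:
  fixes f :: "'a::real_normed_vector \<Rightarrow> 'b::real_normed_vector"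
  assumes f': "(f has_derivative f') (at x)" and "0 < \<delta>"
    and lip: "\<And>y. norm (y - x) < \<delta> \<Longrightarrow> norm (f y - f x) \<le> L * norm (y - x)"
  shows "norm (f' h) \<le> L * norm h"
proof (cases "h = 0")
  case True
  then show ?thesis using linear_0[OF has_derivative_linear[OF f']] by simp
next
  case False
  then have "norm h > 0" by simp
  have lin: "linear f'" using f' by (rule has_derivative_linear)
  show ?thesis
  proof (rule field_le_epsilon)
    fix e :: real assume "e > 0"
    then obtain d where "d > 0" and d: "\<And>y. norm (y - x) < d \<Longrightarrow>
        norm (f y - f x - f' (y - x)) \<le> (e / norm h) * norm (y - x)"
      using f' \<open>norm h > 0\<close> unfolding has_derivative_at_alt by (meson divide_pos_pos)
    define s where "s = min d \<delta> / (2 * norm h)"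
    have "s > 0" using \<open>d > 0\<close> \<open>0 < \<delta>\<close> \<open>norm h > 0\<close> by (simp add: s_def)
    have "norm (s *\<^sub>R h) = min d \<delta> / 2"
      using \<open>s > 0\<close> \<open>norm h > 0\<close> \<open>d > 0\<close> \<open>0 < \<delta>\<close> by (simp add: s_def)
    moreover have "0 < min d \<delta>" using \<open>d > 0\<close> \<open>0 < \<delta>\<close> by simp
    ultimately have small: "norm (s *\<^sub>R h) < min d \<delta>" by linarith
    let ?y = "x + s *\<^sub>R h"
    have "norm (f' (s *\<^sub>R h)) \<le> norm (f ?y - f x) + norm (f ?y - f x - f' (s *\<^sub>R h))"
      by (metis norm_minus_commute norm_triangle_sub add.commute)
    also have "\<dots> \<le> L * norm (s *\<^sub>R h) + (e / norm h) * norm (s *\<^sub>R h)"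
      using d[of ?y] lip[of ?y] small by (intro add_mono) simp_all
    finally have "s * norm (f' h) \<le> s * (L * norm h + e)"
      using \<open>s > 0\<close> \<open>norm h > 0\<close> by (simp add: linear_cmul[OF lin] field_simps)
    then show "norm (f' h) \<le> L * norm h + e" using \<open>s > 0\<close> by simp
  qed
qed

lemma tubular_diffeo_proj_has_derivative:
  fixes M :: "'a::euclidean_space set"
  assumes "compact M" and td: "tubular_diffeo M r" and x: "x \<in> tube M r"
  shows "(proj M has_derivative blinfun_apply (P0 M x)) (at x)"
proof -
  obtain g where "C1_on (tube M r) g" and g: "\<forall>(p, v)\<in>normal_bundle M r. g (p + v) = (p, v)"
    using td by (auto simp: tubular_diffeo_def)
  then obtain g' where "(g has_derivative blinfun_apply g') (at x)"
    using x by (auto simp: C1_on_def)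
  then have "((\<lambda>y. fst (g y)) has_derivative (\<lambda>h. fst (blinfun_apply g' h))) (at x)"
    by (rule has_derivative_fst)
  moreover have "open (tube M r)" using td by (simp add: tubular_diffeo_def)
  moreover have "fst (g y) = proj M y" if "y \<in> tube M r" for y
    using that g proj_tube[OF \<open>compact M\<close> td] by (auto simp: tube_def)
  ultimately have proj': "(proj M has_derivative (\<lambda>h. fst (blinfun_apply g' h))) (at x)"
    using has_derivative_transform_within_open x by blast
  then have "blinfun_apply (P0 M x) = (\<lambda>h. fst (blinfun_apply g' h))"
    unfolding P0_def using frechet_derivative_at[OF proj']
    by (simp add: bounded_linear_Blinfun_apply has_derivative_bounded_linear)
  with proj' show ?thesis by simp
qed

lemma tubular_diffeo_norm_P0_le:
  fixes M :: "'a::euclidean_space set"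
  assumes "compact M" and td: "tubular_diffeo M r" and "0 < t" "t < r" and x: "x \<in> tube M t"
  shows "norm (P0 M x) \<le> 1 / (1 - t / r)"
proof -
  obtain \<delta> where "\<delta> > 0"
    and lip: "\<And>y. norm (y - x) < \<delta> \<Longrightarrow> norm (proj M y - proj M x) \<le> 1 / (1 - t / r) * norm (y - x)"
    using tubular_diffeo_proj_local_lipschitz[OF assms] by blast
  have "x \<in> tube M r" using tube_mono[of t r M] \<open>t < r\<close> x by auto
  then have "(proj M has_derivative blinfun_apply (P0 M x)) (at x)"
    by (rule tubular_diffeo_proj_has_derivative[OF \<open>compact M\<close> td])
  then have "norm (blinfun_apply (P0 M x) h) \<le> 1 / (1 - t / r) * norm h" for h
    using \<open>\<delta> > 0\<close> lip by (rule has_derivative_norm_le_of_local_lipschitz) simp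
  moreover have "0 \<le> 1 / (1 - t / r)" using \<open>0 < t\<close> \<open>t < r\<close> by simp
  ultimately show ?thesis by (rule norm_blinfun_bound[rotated])
qed

lemma norm_blinfun_apply_add_scaleR_le:
  fixes A :: "'a::real_normed_vector \<Rightarrow>\<^sub>L 'b::real_normed_vector"
  assumes "norm v \<le> C" and "0 \<le> \<eta>"
  shows "norm (blinfun_apply A v + \<eta> *\<^sub>R (y - z)) \<le> C * norm A + \<eta> * norm (z - y)"
proof -
  have "norm (blinfun_apply A v) \<le> C * norm A"
    using norm_blinfun[of A v] mult_left_mono[OF assms(1) norm_ge_zero[of A]]
    by (simp add: mult.commute)
  then show ?thesis
    using norm_triangle_ineq[of "blinfun_apply A v" "\<eta> *\<^sub>R (y - z)"] \<open>0 \<le> \<eta>\<close>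
    by (simp add: norm_minus_commute)
qed

theorem lemma9:
  fixes M :: "'a::euclidean_space set" and n :: nat
    and \<tau>M \<tau> \<epsilon> \<eta> C :: real
    and f :: "'a \<Rightarrow> real" and gradf :: "'a \<Rightarrow> 'a"
    and s :: "'a \<Rightarrow> 'a" and s' :: "'a \<Rightarrow> ('a \<Rightarrow>\<^sub>L 'a)"
  assumes manifold: "C2_submanifold M n" and compact: "compact M"
    and reach: "is_reach M \<tau>M" and reach_pos: "\<tau>M > 0"
    and f_deriv: "\<And>x. (f has_derivative (\<lambda>h. gradf x \<bullet> h)) (at x)"
    and f_C1: "continuous_on UNIV gradf"
    and C_def: "C = (SUP x\<in>tube M \<tau>M. norm (gradf x))"
    and eta: "\<eta> \<ge> 0"
    and tau: "0 < \<tau>" "\<tau> < \<tau>M"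
    and eps: "\<epsilon> > 0"
    and s_deriv: "\<And>x. (s has_derivative blinfun_apply (s' x)) (at x)"
    and s_C1: "continuous_on UNIV s'"
    and s_close: "\<And>x. x \<in> tube M \<tau> \<Longrightarrow> norm (s x - proj M x) < \<epsilon>"
    and s'_close: "\<And>x. x \<in> tube M \<tau> \<Longrightarrow> norm (s' x - P0 M x) < \<epsilon>"
  shows "(\<forall>x\<in>tube M \<tau>. norm (s' x) \<le> \<epsilon> + 1 / (1 - \<tau> / \<tau>M)) \<and>
         (\<epsilon> \<le> \<tau> \<longrightarrow> (\<forall>x\<in>tube M \<tau>.
            norm (blinfun_apply (s' x) (gradf x) + \<eta> *\<^sub>R (x - s x))
              \<le> C * norm (s' x) + \<eta> * norm (s x - x) \<and>
            C * norm (s' x) + \<eta> * norm (s x - x)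
              \<le> C * (\<epsilon> + 1 / (1 - \<tau> / \<tau>M)) + 2 * \<eta> * \<tau>))"
proof -
  have td: "tubular_diffeo M \<tau>M" using reach by (simp add: is_reach_def)
  have s'_le: "norm (s' x) \<le> \<epsilon> + 1 / (1 - \<tau> / \<tau>M)" if x: "x \<in> tube M \<tau>" for x
    using norm_triangle_sub[of "s' x" "P0 M x"] s'_close[OF x]
      tubular_diffeo_norm_P0_le[OF compact td tau x] by linarith
  have gradf_le: "norm (gradf x) \<le> C" if x: "x \<in> tube M \<tau>" for x
  proof -
    have "x \<in> tube M \<tau>M" using tube_mono[of \<tau> \<tau>M M] tau x by auto
    then show ?thesis unfolding C_def by (rule cSUP_upper[OF _ bdd_above_norm_tube[OF compact f_C1]])
  qed
  have s_dist: "norm (s x - x) \<le> 2 * \<tau>" if "\<epsilon> \<le> \<tau>" and x: "x \<in> tube M \<tau>" for x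
    using norm_triangle_ineq[of "s x - proj M x" "proj M x - x"] s_close[OF x] \<open>\<epsilon> \<le> \<tau>\<close>
      tubular_diffeo_dist_proj[OF compact td _ x] tau by (simp add: norm_minus_commute)
  show ?thesis
  proof (intro conjI ballI impI)
    fix x assume "x \<in> tube M \<tau>"
    then show "norm (s' x) \<le> \<epsilon> + 1 / (1 - \<tau> / \<tau>M)" by (rule s'_le)
  next
    fix x assume "x \<in> tube M \<tau>"
    then show "norm (blinfun_apply (s' x) (gradf x) + \<eta> *\<^sub>R (x - s x))
        \<le> C * norm (s' x) + \<eta> * norm (s x - x)"
      by (rule norm_blinfun_apply_add_scaleR_le[OF gradf_le eta])
  next
    fix x assume "\<epsilon> \<le> \<tau>" and x: "x \<in> tube M \<tau>"
    have "0 \<le> C" using order_trans[OF norm_ge_zero gradf_le[OF x]] .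
    show "C * norm (s' x) + \<eta> * norm (s x - x) \<le> C * (\<epsilon> + 1 / (1 - \<tau> / \<tau>M)) + 2 * \<eta> * \<tau>"
      using add_mono[OF mult_left_mono[OF s'_le[OF x] \<open>0 \<le> C\<close>]
          mult_left_mono[OF s_dist[OF \<open>\<epsilon> \<le> \<tau>\<close> x] eta]]
      by (simp add: ac_simps)
  qed
qed

end
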